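(* Let $n\ge1$ and let $(P_n,A_n,\lambda)$ be the Gelfand–Tsetlin marked poset with marking $\lambda_0\ge\lambda_1\ge\cdots\ge\lambda_n$. Then: (1) if $\lambda_0>\lambda_1>\cdots>\lambda_n$, then $(P_n,A_n,\lambda)$ is a regular marked poset; (2) $\operatorname{St}(P_n)=\{p_{i,j}: 1\le i<j<n\}$.
   Context: $P_n$ is the poset on $\{p_{i,j}: 0\le i\le j\le n\}$ whose cover relations are exactly $p_{i-1,j}\to p_{i,j}\to p_{i-1,j-1}$ for $1\le i\le j\le n$, where $q\to p$ means $p$ covers $q$ (i.e. $q\prec p$ with nothing strictly between). $A_n=\{p_{0,0},p_{0,1},\dots,p_{0,n}\}$, and the marking $\lambda:A_n\to\mathbb{Z}_{\ge0}$ is $\lambda(p_{0,k})=\lambda_k$. For $p\in P$, let $p\to$ denote the set of elements covering $p$ and $\rightsquigarrow p$ the set of maximal chains ending in $p$, i.e. chains $r_0\to\cdots\to r_k=p$ with $r_0$ minimal. $p$ is a star element if $|p\to|\ge2$ and $|\rightsquigarrow p|\ge2$; $\operatorname{St}(P)$ is the set of star elements. A marked poset $(P,A,\lambda)$ ($A$ containing all extremal elements, $\lambda:A\to\mathbb{Z}_{\ge0}$) is regular if: (1) there are no $a,b\in A$ with $a\to b$; (2) $\lambda_a\ne\lambda_b$ for $a\ne b\in A$; (3) if $a\in A$, $x\in P\setminus A$, $a\to x$, there is no $b\in A$ with $b\prec x$ and $\lambda_a<\lambda_b$; (4) if $a\in A$, $x\in P\setminus A$, $x\to a$, there is no $b\in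 A$ with $x\prec b$ and $\lambda_b<\lambda_a$. *)

theory Defs
  imports Main
begin

text \<open>A finite poset is given by a carrier P and its cover relation cov,
  where cov q p means that p covers q (written q \<rightarrow> p in the paper).\<close>

definition strict_less :: "('a \<Rightarrow> 'a \<Rightarrow> bool) \<Rightarrow> 'a \<Rightarrow> 'a \<Rightarrow> bool" where
  "strict_less cov = cov\<^sup>+\<^sup>+"

definition is_minimal :: "'a set \<Rightarrow> ('a \<Rightarrow> 'a \<Rightarrow> bool) \<Rightarrow> 'a \<Rightarrow> bool" where
  "is_minimal P cov x \<longleftrightarrow> x \<in> P \<and> \<not> (\<exists>q\<in>P. strict_less cov q x)"

definition is_maximal :: "'a set \<Rightarrow> ('a \<Rightarrow> 'a \<Rightarrow> bool) \<Rightarrow> 'a \<Rightarrow> bool" where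
  "is_maximal P cov x \<longleftrightarrow> x \<in> P \<and> \<not> (\<exists>q\<in>P. strict_less cov x q)"

definition covering_set :: "'a set \<Rightarrow> ('a \<Rightarrow> 'a \<Rightarrow> bool) \<Rightarrow> 'a \<Rightarrow> 'a set" where
  "covering_set P cov p = {q \<in> P. cov p q}"

definition chains_to :: "'a set \<Rightarrow> ('a \<Rightarrow> 'a \<Rightarrow> bool) \<Rightarrow> 'a \<Rightarrow> 'a list set" where
  "chains_to P cov p = {rs. rs \<noteq> [] \<and> set rs \<subseteq> P \<and> last rs = p \<and>
      (\<forall>i. Suc i < length rs \<longrightarrow> cov (rs ! i) (rs ! Suc i)) \<and> is_minimal P cov (hd rs)}"

definition star_elements :: "'a set \<Rightarrow> ('a \<Rightarrow> 'a \<Rightarrow> bool) \<Rightarrow> 'a set" where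
  "star_elements P cov = {p \<in> P. card (covering_set P cov p) \<ge> 2 \<and> card (chains_to P cov p) \<ge> 2}"

definition regular_marked_poset ::
  "'a set \<Rightarrow> ('a \<Rightarrow> 'a \<Rightarrow> bool) \<Rightarrow> 'a set \<Rightarrow> ('a \<Rightarrow> nat) \<Rightarrow> bool" where
  "regular_marked_poset P cov A lam \<longleftrightarrow>
     A \<subseteq> P \<and> {x \<in> P. is_minimal P cov x \<or> is_maximal P cov x} \<subseteq> A \<and>
     \<not> (\<exists>a\<in>A. \<exists>b\<in>A. cov a b) \<and>
     (\<forall>a\<in>A. \<forall>b\<in>A. a \<noteq> b \<longrightarrow> lam a \<noteq> lam b) \<and>
     (\<forall>a\<in>A. \<forall>x\<in>P - A. cov a x \<longrightarrow>
        \<not> (\<exists>b\<in>A. strict_less cov b x \<and> lam a < lam b)) \<and>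
     (\<forall>a\<in>A. \<forall>x\<in>P - A. cov x a \<longrightarrow>
        \<not> (\<exists>b\<in>A. strict_less cov x b \<and> lam b < lam a))"

text \<open>p_{i,j} is represented by the pair (i, j).\<close>
definition GT_P :: "nat \<Rightarrow> (nat \<times> nat) set" where
  "GT_P n = {(i, j). i \<le> j \<and> j \<le> n}"

definition GT_cov :: "nat \<Rightarrow> nat \<times> nat \<Rightarrow> nat \<times> nat \<Rightarrow> bool" where
  "GT_cov n q p \<longleftrightarrow> (\<exists>i j. 1 \<le> i \<and> i \<le> j \<and> j \<le> n \<and>
      ((q = (i - 1, j) \<and> p = (i, j)) \<or> (q = (i, j) \<and> p = (i - 1, j - 1))))"

definition GT_A :: "nat \<Rightarrow> (nat \<times> nat) set" where
  "GT_A n = {(0, k) | k. k \<le> n}"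

text \<open>Marking lam(p_{0,k}) = lam_k (only its values on GT_A matter).\<close>
definition GT_mark :: "(nat \<Rightarrow> nat) \<Rightarrow> nat \<times> nat \<Rightarrow> nat" where
  "GT_mark lam p = lam (snd p)"

end

theory Submission
  imports Defs
begin

(* Every cover p_{i-1,j} \<rightarrow> p_{i,j} or p_{i,j} \<rightarrow> p_{i-1,j-1} raises the rank i - 2j by one and
   increases neither j nor j - i.  Hence p_{0,n} is the unique minimal element, and the only covers
   leaving or entering a marked element are p_{0,j} \<rightarrow> p_{1,j} and p_{1,k+1} \<rightarrow> p_{0,k}; comparing
   j, resp. j - i, with the other marked element then yields regularity.
   An element p_{i,j} has two upper covers iff 1 \<le> i < j.  A chain to p_{i,n} never leaves the
   line j = n, so it is unique.  For j < n, a chain may climb that line to p_{c,n}, step either up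
   to p_{c+1,n} or down to p_{c-1,n-1}, and then descend diagonally from p_{c,n-1} to p_{i,j}. *)

lemma strict_less_preserved:
  assumes "strict_less cov q p" and "transp R" and "\<And>x y. cov x y \<Longrightarrow> R (f x) (f y)"
  shows "R (f q) (f p)"
  using assms(1) unfolding strict_less_def
  by (induction rule: tranclp_induct) (use assms(2,3) in \<open>auto dest: transpD\<close>)

lemma set_subset_if_successively:
  assumes "successively R xs" and "xs \<noteq> []" and "hd xs \<in> P" and "\<And>x y. R x y \<Longrightarrow> y \<in> P"
  shows "set xs \<subseteq> P"
  using assms by (induction R xs rule: successively.induct) auto

lemma chains_toI:
  assumes "rs \<noteq> []" and "is_minimal P cov (hd rs)" and "successively cov rs" and "last rs = p"
    and "\<And>x y. cov x y \<Longrightarrow> y \<in> P"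
  shows "rs \<in> chains_to P cov p"
proof -
  have "set rs \<subseteq> P"
    using assms by (intro set_subset_if_successively[of cov]) (auto simp: is_minimal_def)
  with assms show ?thesis by (simp add: chains_to_def successively_conv_nth)
qed

lemma successively_if_chains_to: "rs \<in> chains_to P cov p \<Longrightarrow> successively cov rs"
  by (simp add: chains_to_def successively_conv_nth)

lemma strict_less_if_successively:
  assumes "successively cov rs" and "k < l" and "l < length rs"
  shows "strict_less cov (rs ! k) (rs ! l)"
  using assms(2,3)
proof (induction l)
  case (Suc l)
  have "cov (rs ! l) (rs ! Suc l)" using successively_nth[OF assms(1) Suc.prems(2)] .
  with Suc show ?case
    unfolding strict_less_def by (cases "k = l") (auto intro: tranclp.trancl_into_trancl)
qed simp

lemma GT_covE:
  assumes "GT_cov n q p"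
  obtains (up) i j where "q = (i, j)" "p = (Suc i, j)" "i < j" "j \<le> n"
    | (down) i j where "q = (Suc i, Suc j)" "p = (i, j)" "i \<le> j" "Suc j \<le> n"
proof -
  obtain i j where "1 \<le> i" "i \<le> j" "j \<le> n"
    "(q = (i - 1, j) \<and> p = (i, j)) \<or> (q = (i, j) \<and> p = (i - 1, j - 1))"
    using assms unfolding GT_cov_def by blast
  then show thesis
    using that by (cases i; cases j) auto
qed

lemma GT_cov_up: "i < j \<Longrightarrow> j \<le> n \<Longrightarrow> GT_cov n (i, j) (Suc i, j)"
  unfolding GT_cov_def by (rule exI[of _ "Suc i"], rule exI[of _ j]) auto

lemma GT_cov_down: "i \<le> j \<Longrightarrow> Suc j \<le> n \<Longrightarrow> GT_cov n (Suc i, Suc j) (i, j)"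
  unfolding GT_cov_def by (rule exI[of _ "Suc i"], rule exI[of _ "Suc j"]) auto

lemma GT_cov_in_GT_P: "GT_cov n q p \<Longrightarrow> q \<in> GT_P n \<and> p \<in> GT_P n"
  by (elim GT_covE) (auto simp: GT_P_def)

definition GT_rank :: "nat \<times> nat \<Rightarrow> int" where
  "GT_rank p = int (fst p) - 2 * int (snd p)"

lemma GT_rank_cov: "GT_cov n q p \<Longrightarrow> GT_rank p = GT_rank q + 1"
  by (elim GT_covE) (auto simp: GT_rank_def)

lemma GT_rank_bounds: "p \<in> GT_P n \<Longrightarrow> - 2 * int n \<le> GT_rank p \<and> GT_rank p \<le> 0"
  by (auto simp: GT_P_def GT_rank_def)

lemma GT_less_imp:
  assumes "strict_less (GT_cov n) q p"
  shows "GT_rank q < GT_rank p" and "snd p \<le> snd q" and "snd p - fst p \<le> snd q - fst q"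
proof -
  show "GT_rank q < GT_rank p"
    by (rule strict_less_preserved[OF assms]) (auto simp: GT_rank_cov transp_def)
  show "snd p \<le> snd q"
    by (rule strict_less_preserved[OF assms, where R = "\<lambda>x y. y \<le> x"])
      (auto simp: transp_def elim: GT_covE)
  show "snd p - fst p \<le> snd q - fst q"
    by (rule strict_less_preserved[OF assms, where R = "\<lambda>x y. y \<le> x"])
      (auto simp: transp_def elim: GT_covE)
qed

lemma GT_minimal_iff: "is_minimal (GT_P n) (GT_cov n) x \<longleftrightarrow> x = (0, n)"
proof
  assume min: "is_minimal (GT_P n) (GT_cov n) x"
  have no_lower_cover: "\<not> GT_cov n q x" for q
    using min GT_cov_in_GT_P[of n q x] unfolding is_minimal_def strict_less_def by blast
  obtain i j where x: "x = (i, j)" and "i \<le> j" "j \<le> n"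
    using min unfolding is_minimal_def GT_P_def by auto
  have "i = 0"
    using no_lower_cover[of "(i - 1, j)"] GT_cov_up[of "i - 1" j n] x \<open>i \<le> j\<close> \<open>j \<le> n\<close>
    by (cases i) auto
  moreover have "j = n"
    using no_lower_cover[of "(1, Suc j)"] GT_cov_down[of 0 j n] x \<open>i = 0\<close> \<open>j \<le> n\<close>
    by fastforce
  ultimately show "x = (0, n)" using x by simp
next
  assume x: "x = (0, n)"
  have "\<not> strict_less (GT_cov n) q x" if "q \<in> GT_P n" for q
    using GT_less_imp(1)[of n q x] GT_rank_bounds[OF that] x by (auto simp: GT_rank_def)
  then show "is_minimal (GT_P n) (GT_cov n) x" using x unfolding is_minimal_def GT_P_def by auto
qed

lemma GT_maximal_fst: "is_maximal (GT_P n) (GT_cov n) x \<Longrightarrow> fst x = 0"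
proof (rule ccontr)
  assume max: "is_maximal (GT_P n) (GT_cov n) x" and "fst x \<noteq> 0"
  then obtain i j where x: "x = (Suc i, Suc j)" and "i \<le> j" "Suc j \<le> n"
    unfolding is_maximal_def GT_P_def by (cases x; cases "fst x"; cases "snd x") auto
  then have "GT_cov n x (i, j)" by (simp add: GT_cov_down)
  then show False
    using max GT_cov_in_GT_P unfolding is_maximal_def strict_less_def by blast
qed

lemma GT_cov_from_A: "GT_cov n (0, j) x \<Longrightarrow> x = (1, j)"
  by (elim GT_covE) auto

lemma GT_cov_to_A: "GT_cov n x (0, k) \<Longrightarrow> x = (1, Suc k)"
  by (elim GT_covE) auto

lemma GT_rank_chain_nth:
  assumes rs: "rs \<in> chains_to (GT_P n) (GT_cov n) p" and "k < length rs"
  shows "GT_rank (rs ! k) = - 2 * int n + int k"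
  using \<open>k < length rs\<close>
proof (induction k)
  case 0
  have "rs \<noteq> []" and "hd rs = (0, n)"
    using rs GT_minimal_iff unfolding chains_to_def by auto
  then show ?case by (simp add: hd_conv_nth GT_rank_def)
next
  case (Suc k)
  then show ?case
    using GT_rank_cov successively_nth[OF successively_if_chains_to[OF rs]] by fastforce
qed

lemma finite_GT_chains: "finite (chains_to (GT_P n) (GT_cov n) p)"
proof -
  have "length rs \<le> 2 * n + 1" if rs: "rs \<in> chains_to (GT_P n) (GT_cov n) p" for rs
  proof (rule ccontr)
    assume "\<not> length rs \<le> 2 * n + 1"
    then have "rs ! (2 * n + 1) \<in> GT_P n" and "GT_rank (rs ! (2 * n + 1)) = 1"
      using rs GT_rank_chain_nth[OF rs, of "2 * n + 1"] unfolding chains_to_def by auto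
    then show False using GT_rank_bounds by fastforce
  qed
  moreover have "finite (GT_P n)"
    by (rule finite_subset[of _ "{..n} \<times> {..n}"]) (auto simp: GT_P_def)
  ultimately show ?thesis
    by (intro finite_subset[OF _ finite_lists_length_le[of "GT_P n" "2 * n + 1"]])
      (auto simp: chains_to_def)
qed

definition GT_column :: "nat \<Rightarrow> nat \<Rightarrow> (nat \<times> nat) list" where
  "GT_column n i = map (\<lambda>k. (k, n)) [0..<Suc i]"

lemma chains_to_GT_column: "chains_to (GT_P n) (GT_cov n) (i, n) \<subseteq> {GT_column n i}"
proof
  fix rs assume rs: "rs \<in> chains_to (GT_P n) (GT_cov n) (i, n)"
  then have ne: "rs \<noteq> []" and in_P: "set rs \<subseteq> GT_P n" and last: "last rs = (i, n)"
    unfolding chains_to_def by auto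
  have nth: "rs ! k = (k, n)" if k: "k < length rs" for k
  proof -
    have "n \<le> snd (rs ! k)"
    proof (cases "Suc k = length rs")
      case True
      then have "rs ! k = last rs" using ne by (simp add: last_conv_nth flip: True)
      then show ?thesis using last by simp
    next
      case False
      then have "strict_less (GT_cov n) (rs ! k) (rs ! (length rs - 1))"
        using k by (intro strict_less_if_successively successively_if_chains_to[OF rs]) auto
      then show ?thesis using GT_less_imp(2) last ne by (fastforce simp: last_conv_nth)
    qed
    moreover have "snd (rs ! k) \<le> n" using in_P nth_mem[OF k] by (auto simp: GT_P_def)
    ultimately show ?thesis
      using GT_rank_chain_nth[OF rs k] by (cases "rs ! k") (simp add: GT_rank_def)
  qed
  then have "last rs = (length rs - 1, n)" using ne by (simp add: last_conv_nth)
  then have "length rs = Suc i" using last ne by (cases rs) auto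
  then show "rs \<in> {GT_column n i}"
    by (auto simp: GT_column_def nth simp del: upt_Suc intro: nth_equalityI)
qed

lemma GT_column_not_Nil [simp]: "GT_column n i \<noteq> []"
  by (simp add: GT_column_def del: upt_Suc)

lemma hd_GT_column [simp]: "hd (GT_column n i) = (0, n)"
  by (simp add: GT_column_def hd_map del: upt_Suc)

lemma last_GT_column [simp]: "last (GT_column n i) = (i, n)"
  by (simp add: GT_column_def last_map del: upt_Suc)

lemma successively_GT_column: "i \<le> n \<Longrightarrow> successively (GT_cov n) (GT_column n i)"
  by (auto simp: GT_column_def successively_map successively_conv_nth GT_cov_up
      simp del: upt_Suc)

definition GT_diagonal :: "nat \<Rightarrow> nat \<Rightarrow> nat \<Rightarrow> (nat \<times> nat) list" where
  "GT_diagonal i j d = map (\<lambda>k. (i - k, j - k)) [0..<Suc d]"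

lemma GT_diagonal_not_Nil [simp]: "GT_diagonal i j d \<noteq> []"
  by (simp add: GT_diagonal_def del: upt_Suc)

lemma hd_GT_diagonal [simp]: "hd (GT_diagonal i j d) = (i, j)"
  by (simp add: GT_diagonal_def hd_map del: upt_Suc)

lemma last_GT_diagonal [simp]: "last (GT_diagonal i j d) = (i - d, j - d)"
  by (simp add: GT_diagonal_def last_map del: upt_Suc)

lemma successively_GT_diagonal:
  assumes "d \<le> i" and "i \<le> j" and "j \<le> n"
  shows "successively (GT_cov n) (GT_diagonal i j d)"
proof -
  have "GT_cov n (i - k, j - k) (i - Suc k, j - Suc k)" if "k < d" for k
  proof -
    have "(i - k, j - k) = (Suc (i - Suc k), Suc (j - Suc k))" using that assms by auto
    then show ?thesis using that assms by (simp add: GT_cov_down)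
  qed
  then show ?thesis
    by (auto simp: GT_diagonal_def successively_map successively_conv_nth simp del: upt_Suc)
qed

lemma two_GT_chains:
  assumes "1 \<le> i" and "i < j" and "j < n"
  shows "2 \<le> card (chains_to (GT_P n) (GT_cov n) (i, j))"
proof -
  define c where "c = i + n - j - 1"
  define tail where "tail = GT_diagonal c (n - 1) (n - 1 - j)"
  define via_top where "via_top = GT_column n c @ (Suc c, n) # tail"
  define via_side where "via_side = GT_column n c @ (c - 1, n - 1) # tail"
  have c: "1 \<le> c" "Suc c < n" using assms by (auto simp: c_def)
  have tail: "tail \<noteq> []" "successively (GT_cov n) tail" "hd tail = (c, n - 1)" "last tail = (i, j)"
    using assms c by (auto simp: tail_def c_def intro!: successively_GT_diagonal)
  have chain: "rs \<in> chains_to (GT_P n) (GT_cov n) (i, j)"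
    if "rs = GT_column n c @ x # tail" and "GT_cov n (c, n) x" and "GT_cov n x (c, n - 1)" for rs x
  proof (rule chains_toI)
    show "successively (GT_cov n) rs"
      using that tail c by (auto simp: successively_append_iff successively_Cons successively_GT_column)
  qed (use that tail GT_minimal_iff GT_cov_in_GT_P in \<open>auto simp: hd_append\<close>)
  have "via_top \<in> chains_to (GT_P n) (GT_cov n) (i, j)"
  proof (rule chain[OF via_top_def])
    show "GT_cov n (c, n) (Suc c, n)" using c by (simp add: GT_cov_up)
    show "GT_cov n (Suc c, n) (c, n - 1)" using c GT_cov_down[of c "n - 1" n] by simp
  qed
  moreover have "via_side \<in> chains_to (GT_P n) (GT_cov n) (i, j)"
  proof (rule chain[OF via_side_def])
    show "GT_cov n (c, n) (c - 1, n - 1)" using c GT_cov_down[of "c - 1" "n - 1" n] by simp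
    show "GT_cov n (c - 1, n - 1) (c, n - 1)" using c GT_cov_up[of "c - 1" "n - 1" n] by simp
  qed
  moreover have "via_top \<noteq> via_side" using c by (simp add: via_top_def via_side_def)
  ultimately show ?thesis
    using card_mono[OF finite_GT_chains, of "{via_top, via_side}" n "(i, j)"] by simp
qed

lemma GT_covering_set:
  assumes "(i, j) \<in> GT_P n"
  shows "covering_set (GT_P n) (GT_cov n) (i, j) =
    (if i < j then {(Suc i, j)} else {}) \<union> (if 1 \<le> i then {(i - 1, j - 1)} else {})"
proof -
  have "GT_cov n (i, j) (i - 1, j - 1)" if "1 \<le> i"
    using that assms GT_cov_down[of "i - 1" "j - 1" n] by (auto simp: GT_P_def)
  then show ?thesis
    using assms GT_cov_in_GT_P[of n "(i, j)"]
    by (auto simp: covering_set_def GT_P_def GT_cov_up elim: GT_covE)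
qed

lemma two_le_card_GT_covering_set_iff:
  "(i, j) \<in> GT_P n \<Longrightarrow> 2 \<le> card (covering_set (GT_P n) (GT_cov n) (i, j)) \<longleftrightarrow> 1 \<le> i \<and> i < j"
  by (simp add: GT_covering_set)

lemma GT_star_elements:
  "star_elements (GT_P n) (GT_cov n) = {(i, j). 1 \<le> i \<and> i < j \<and> j < n}"
proof (intro set_eqI iffI)
  fix p assume p: "p \<in> star_elements (GT_P n) (GT_cov n)"
  obtain i j where ij: "p = (i, j)" by fastforce
  have "card (chains_to (GT_P n) (GT_cov n) (i, n)) \<le> 1"
    using card_mono[OF _ chains_to_GT_column] by simp
  then show "p \<in> {(i, j). 1 \<le> i \<and> i < j \<and> j < n}"
    using p two_le_card_GT_covering_set_iff[of i j n]
    by (auto simp: star_elements_def ij GT_P_def le_less)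
next
  fix p assume "p \<in> {(i, j). 1 \<le> i \<and> i < j \<and> j < n}"
  then obtain i j where "p = (i, j)" "1 \<le> i" "i < j" "j < n" by blast
  then show "p \<in> star_elements (GT_P n) (GT_cov n)"
    using two_le_card_GT_covering_set_iff[of i j n] two_GT_chains[of i j n]
    by (auto simp: star_elements_def GT_P_def)
qed

lemma lt_of_Suc_lt_upto:
  fixes f :: "nat \<Rightarrow> 'a::order"
  assumes "\<forall>k<n. f (Suc k) < f k" and "k < m" and "m \<le> n"
  shows "f m < f k"
proof -
  have "f m \<le> f (Suc k)"
    by (rule lift_Suc_antimono_le_ivl[of "{..<n}"]) (use assms in \<open>auto intro: less_imp_le\<close>)
  also have "f (Suc k) < f k" using assms by auto
  finally show ?thesis .
qed

lemma GT_regular: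
  fixes lam :: "nat \<Rightarrow> nat"
  assumes strict: "\<forall>k<n. lam (Suc k) < lam k"
  shows "regular_marked_poset (GT_P n) (GT_cov n) (GT_A n) (GT_mark lam)"
proof -
  have anti: "lam m \<le> lam k" if "k \<le> m" "m \<le> n" for k m
    using lt_of_Suc_lt_upto[OF strict, of k m] that by (cases "k = m") auto
  have "GT_A n \<subseteq> GT_P n" by (auto simp: GT_A_def GT_P_def)
  moreover have "{x \<in> GT_P n. is_minimal (GT_P n) (GT_cov n) x \<or> is_maximal (GT_P n) (GT_cov n) x}
      \<subseteq> GT_A n"
  proof clarify
    fix i j assume "(i, j) \<in> GT_P n"
      and "is_minimal (GT_P n) (GT_cov n) (i, j) \<or> is_maximal (GT_P n) (GT_cov n) (i, j)"
    then show "(i, j) \<in> GT_A n"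
      using GT_minimal_iff GT_maximal_fst by (auto simp: GT_A_def GT_P_def)
  qed
  moreover have "\<not> (\<exists>a\<in>GT_A n. \<exists>b\<in>GT_A n. GT_cov n a b)"
    by (auto simp: GT_A_def dest: GT_cov_from_A)
  moreover have "\<forall>a\<in>GT_A n. \<forall>b\<in>GT_A n. a \<noteq> b \<longrightarrow> GT_mark lam a \<noteq> GT_mark lam b"
  proof (intro ballI impI)
    fix a b assume "a \<in> GT_A n" "b \<in> GT_A n" "a \<noteq> b"
    then obtain k m where "a = (0, k)" "b = (0, m)" "k \<noteq> m" "k \<le> n" "m \<le> n"
      by (auto simp: GT_A_def)
    then show "GT_mark lam a \<noteq> GT_mark lam b"
      using lt_of_Suc_lt_upto[OF strict, of k m] lt_of_Suc_lt_upto[OF strict, of m k]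
      by (cases "k < m") (auto simp: GT_mark_def)
  qed
  moreover have "\<forall>a\<in>GT_A n. \<forall>x\<in>GT_P n - GT_A n. GT_cov n a x \<longrightarrow>
      \<not> (\<exists>b\<in>GT_A n. strict_less (GT_cov n) b x \<and> GT_mark lam a < GT_mark lam b)"
  proof (intro ballI impI notI, elim bexE conjE)
    fix a x b assume "a \<in> GT_A n" "GT_cov n a x" "b \<in> GT_A n" "strict_less (GT_cov n) b x"
      and "GT_mark lam a < GT_mark lam b"
    moreover obtain j m where "a = (0, j)" "b = (0, m)" "m \<le> n"
      using \<open>a \<in> GT_A n\<close> \<open>b \<in> GT_A n\<close> by (auto simp: GT_A_def)
    moreover have "x = (1, j)" using \<open>GT_cov n a x\<close> \<open>a = (0, j)\<close> GT_cov_from_A by blast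
    ultimately show False
      using GT_less_imp(2)[of n b x] anti[of j m] by (simp add: GT_mark_def)
  qed
  moreover have "\<forall>a\<in>GT_A n. \<forall>x\<in>GT_P n - GT_A n. GT_cov n x a \<longrightarrow>
      \<not> (\<exists>b\<in>GT_A n. strict_less (GT_cov n) x b \<and> GT_mark lam b < GT_mark lam a)"
  proof (intro ballI impI notI, elim bexE conjE)
    fix a x b assume "a \<in> GT_A n" "GT_cov n x a" "b \<in> GT_A n" "strict_less (GT_cov n) x b"
      and "GT_mark lam b < GT_mark lam a"
    moreover obtain k m where "a = (0, k)" "b = (0, m)" "k \<le> n"
      using \<open>a \<in> GT_A n\<close> \<open>b \<in> GT_A n\<close> by (auto simp: GT_A_def)
    moreover have "x = (1, Suc k)" using \<open>GT_cov n x a\<close> \<open>a = (0, k)\<close> GT_cov_to_A by blast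
    ultimately show False
      using GT_less_imp(3)[of n x b] anti[of m k] by (simp add: GT_mark_def)
  qed
  ultimately show ?thesis unfolding regular_marked_poset_def by blast
qed

theorem lemma6p2:
  fixes n :: nat and lam :: "nat \<Rightarrow> nat"
  assumes "n \<ge> 1"
    and "\<forall>k < n. lam (Suc k) \<le> lam k"
  shows "((\<forall>k < n. lam (Suc k) < lam k) \<longrightarrow>
            regular_marked_poset (GT_P n) (GT_cov n) (GT_A n) (GT_mark lam))
       \<and> star_elements (GT_P n) (GT_cov n) = {(i, j). 1 \<le> i \<and> i < j \<and> j < n}"
  using GT_regular GT_star_elements by blast

end
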